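(* For every integer $d>3$, the lattice $[2 \; d+1 \; 2d]$ does not represent $-2$.
   Context: Notation: $[a\; b\; c]$ with $a,b,c\in\mathbb{Z}$ denotes a lattice of rank 2 with a basis whose Gram matrix is $\begin{pmatrix} a & b\\ b & c\end{pmatrix}$. A lattice represents an integer $m$ if it contains an element $x$ with $x^2=m$. *)

theory Defs
  imports Main
begin

text \<open>The rank-2 lattice [a b c]: Z^2 with Gram matrix ((a,b),(b,c)).
  The norm of the element x e1 + y e2 is a x^2 + 2 b x y + c y^2.\<close>

definition lattice_norm :: "int \<Rightarrow> int \<Rightarrow> int \<Rightarrow> int \<Rightarrow> int \<Rightarrow> int" where
  "lattice_norm a b c x y = a * x^2 + 2 * b * x * y + c * y^2"

definition represents :: "int \<Rightarrow> int \<Rightarrow> int \<Rightarrow> int \<Rightarrow> bool" where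
  "represents a b c m \<longleftrightarrow> (\<exists>x y. lattice_norm a b c x y = m)"

end

theory Submission
  imports Defs
begin

text \<open>The form is 2(x + y)(x + d y). A norm of -2 therefore makes x + y and x + d y
  two units of opposite sign, whose difference (d - 1) y is then \<plusminus>2; so d - 1 divides 2.\<close>

lemma lattice_norm_split_product:
  "lattice_norm (2 * p * r) (p * s + q * r) (2 * q * s) x y = 2 * ((p * x + q * y) * (r * x + s * y))"
  unfolding lattice_norm_def by (simp add: algebra_simps power2_eq_square)

lemma represents_minus_two_imp_dvd:
  fixes d :: int
  assumes "represents 2 (d + 1) (2 * d) (-2)"
  shows "d - 1 dvd 2"
proof -
  obtain x y where "lattice_norm 2 (d + 1) (2 * d) x y = -2"
    using assms unfolding represents_def by blast
  then have "(x + y) * (x + d * y) = -1"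
    using lattice_norm_split_product[of 1 1 d 1 x y] by simp
  then have "x + y = 1 \<and> x + d * y = -1 \<or> x + y = -1 \<and> x + d * y = 1"
    by (simp add: zmult_eq_neg1_iff)
  then have "(d - 1) * y = -2 \<or> (d - 1) * y = 2"
    by (auto simp: algebra_simps)
  then show ?thesis
    by (metis dvd_minus_iff dvd_triv_left)
qed

theorem lemma3p3:
  fixes d :: int
  assumes "d > 3"
  shows "\<not> represents 2 (d + 1) (2 * d) (-2)"
proof
  assume "represents 2 (d + 1) (2 * d) (-2)"
  then have "d - 1 \<le> 2"
    using assms by (intro zdvd_imp_le represents_minus_two_imp_dvd) auto
  then show False
    using assms by simp
qed

end
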